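(* Given a privacy parameter $p\in[0,1]$, define $q=\max(p,1-p)$. Then (i) the consistent normal form of $\{\mathrm{RR}_p\}$ equals the consistent normal form of $\{\mathrm{RR}_q\}$; and (ii) if $p=1/2$, the consistent normal form of $\{\mathrm{RR}_p\}$ consists exactly of the algorithms $\mathcal{M}$ whose outputs are statistically independent of their inputs, i.e. $P[\mathcal{M}(D_i)=\omega]=P[\mathcal{M}(D_j)=\omega]$ for all datasets $D_i,D_j$ in the input domain and all $\omega$ in the range of $\mathcal{M}$ (so attackers learn nothing from those outputs).
   Context: A privacy definition is a set of (possibly randomized) algorithms with a common input domain. The consistent normal form of a privacy definition $\mathcal{P}$ is the smallest set of algorithms containing $\mathcal{P}$ that is closed under (a) post-processing: if $\mathcal{M}$ is in the set and $\mathcal{A}$ is any algorithm whose domain contains the range of $\mathcal{M}$ and whose random bits are independent of those of $\mathcal{M}$, then $\mathcal{A}\circ\mathcal{M}$ is in the set; and (b) convexity: if $\mathcal{M}_1,\mathcal{M}_2$ are in the set, then the algorithm running $\mathcal{M}_1$ with probability $p$ and $\mathcal{M}_2$ with probability $1-p$ is in the set. Algorithms with identical output distributions on every input are considered equivalent. The input domain is the set of all bit strings of length $k$ (tables with $k$ tuples and one binary attribute), and $\mathrm{RR}_p$ (randomized response with parameter $p$) is the algorithm that, on input $D$, independently flips each bit of $D$ with probability $1-p$. *)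

theory Defs
  imports "HOL-Probability.Probability"
begin

text \<open>Input domain: tables with k tuples and one binary attribute, i.e. bit strings of length k.\<close>
definition in_dom :: "nat \<Rightarrow> bool list set" where
  "in_dom k = {D. length D = k}"

fun RR :: "real \<Rightarrow> bool list \<Rightarrow> bool list pmf" where
  "RR p [] = return_pmf []"
| "RR p (x # xs) =
     bind_pmf (bernoulli_pmf p) (\<lambda>b. bind_pmf (RR p xs) (\<lambda>ys. return_pmf ((if b then x else \<not> x) # ys)))"

inductive_set cnf :: "nat \<Rightarrow> (bool list \<Rightarrow> 'b pmf) set \<Rightarrow> (bool list \<Rightarrow> 'b pmf) set"
  for k :: nat and P :: "(bool list \<Rightarrow> 'b pmf) set" where
  base: "M \<in> P \<Longrightarrow> M \<in> cnf k P"
| post: "M \<in> cnf k P \<Longrightarrow> (\<lambda>D. bind_pmf (M D) A) \<in> cnf k P"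
| conv: "M1 \<in> cnf k P \<Longrightarrow> M2 \<in> cnf k P \<Longrightarrow> 0 \<le> r \<Longrightarrow> r \<le> 1 \<Longrightarrow>
         (\<lambda>D. bind_pmf (bernoulli_pmf r) (\<lambda>c. if c then M1 D else M2 D)) \<in> cnf k P"
| equiv: "M \<in> cnf k P \<Longrightarrow> (\<forall>D\<in>in_dom k. M' D = M D) \<Longrightarrow> M' \<in> cnf k P"

end

theory Submission
  imports Defs
begin

text \<open>Flipping every output bit of \<open>RR\<^sub>p\<close> yields \<open>RR\<^sub>1\<^sub>-\<^sub>p\<close>. Since flipping is an invertible
  post-processing, each of the two mechanisms lies in the normal form of the other, so the two normal
  forms coincide; \<open>q = max p (1 - p)\<close> is one of \<open>p\<close> and \<open>1 - p\<close>. For \<open>p = 1/2\<close> each output bit is a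
  fair coin regardless of the input, so \<open>RR\<^sub>1\<^sub>/\<^sub>2\<close> does not depend on its input. Post-processing,
  convex combinations and equivalence preserve input-independence, and conversely an
  input-independent \<open>M\<close> is obtained by post-processing with the constant map to the common output
  distribution of \<open>M\<close>.\<close>

lemma map_pmf_Not_bernoulli_pmf:
  assumes "0 \<le> p" "p \<le> 1"
  shows "map_pmf Not (bernoulli_pmf p) = bernoulli_pmf (1 - p)"
proof (rule pmf_eqI)
  fix b :: bool
  have "pmf (map_pmf Not (bernoulli_pmf p)) (\<not> \<not> b) = pmf (bernoulli_pmf p) (\<not> b)"
    by (rule pmf_map_inj') (simp add: inj_def)
  then show "pmf (map_pmf Not (bernoulli_pmf p)) b = pmf (bernoulli_pmf (1 - p)) b"
    using assms by (cases b) auto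
qed

lemma RR_eq_map_Not_RR:
  assumes "0 \<le> p" "p \<le> 1"
  shows "RR p D = map_pmf (map Not) (RR (1 - p) D)"
proof (induction D)
  case Nil
  then show ?case by simp
next
  case (Cons x xs)
  have flip: "(\<not> (if \<not> b then x else \<not> x)) = (if b then x else \<not> x)" for b
    by auto
  have "RR (1 - p) (x # xs) = bind_pmf (map_pmf Not (bernoulli_pmf p))
     (\<lambda>b. bind_pmf (RR (1 - p) xs) (\<lambda>ys. return_pmf ((if b then x else \<not> x) # ys)))"
    using map_pmf_Not_bernoulli_pmf[OF assms] by simp
  then show ?case using Cons
    by (simp add: map_pmf_def bind_map_pmf bind_assoc_pmf bind_return_pmf flip)
qed

lemma RR_half_eq:
  assumes "length D = length D'"
  shows "RR (1/2) D = RR (1/2) D'"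
  using assms
proof (induction D arbitrary: D')
  case Nil
  then show ?case by simp
next
  case (Cons x xs)
  then obtain y ys where D': "D' = y # ys" and "length xs = length ys"
    by (cases D') auto
  then have IH: "RR (1/2) xs = RR (1/2) ys"
    using Cons.IH by simp
  define coin where "coin = (\<lambda>c. bind_pmf (RR (1/2) ys) (\<lambda>zs. return_pmf (c # zs)))"
  have bit: "(if b then z else \<not> z) = (b \<longleftrightarrow> z)" for b z :: bool
    by auto
  have fair: "RR (1/2) (z # ys) = bind_pmf (bernoulli_pmf (1/2)) coin" for z
  proof (cases z)
    case True
    then show ?thesis by (simp add: coin_def bit)
  next
    case False
    have "RR (1/2) (z # ys) = bind_pmf (map_pmf Not (bernoulli_pmf (1/2))) coin"
      using False by (simp add: coin_def bind_map_pmf bit)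
    also have "map_pmf Not (bernoulli_pmf (1/2)) = bernoulli_pmf (1/2)"
      using map_pmf_Not_bernoulli_pmf[of "1/2"] by simp
    finally show ?thesis .
  qed
  have "RR (1/2) (x # xs) = RR (1/2) (x # ys)"
    by (simp only: RR.simps IH)
  also have "\<dots> = RR (1/2) (y # ys)"
    by (simp only: fair)
  finally show ?case
    using D' by simp
qed

lemma cnf_map_pmf:
  assumes "M \<in> cnf k P"
  shows "(\<lambda>D. map_pmf f (M D)) \<in> cnf k P"
  unfolding map_pmf_def by (rule cnf.post[OF assms])

lemma cnf_subset_cnf:
  assumes "P \<subseteq> cnf k Q"
  shows "cnf k P \<subseteq> cnf k Q"
proof
  fix M assume "M \<in> cnf k P"
  then show "M \<in> cnf k Q"
    by (induction rule: cnf.induct) (use assms in \<open>auto intro: cnf.intros\<close>)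
qed

lemma cnf_singleton_eqI:
  assumes "\<And>D. M D = map_pmf f (N D)" and "\<And>D. N D = map_pmf g (M D)"
  shows "cnf k {M} = cnf k {N}"
proof
  have "(\<lambda>D. map_pmf f (N D)) \<in> cnf k {N}"
    by (intro cnf_map_pmf cnf.base) simp
  then show "cnf k {M} \<subseteq> cnf k {N}"
    by (intro cnf_subset_cnf) (simp add: assms(1)[abs_def])
  have "(\<lambda>D. map_pmf g (M D)) \<in> cnf k {M}"
    by (intro cnf_map_pmf cnf.base) simp
  then show "cnf k {N} \<subseteq> cnf k {M}"
    by (intro cnf_subset_cnf) (simp add: assms(2)[abs_def])
qed

lemma cnf_input_independent:
  assumes "\<forall>N\<in>P. \<forall>Di\<in>in_dom k. \<forall>Dj\<in>in_dom k. N Di = N Dj"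
    and "M \<in> cnf k P" and "Di \<in> in_dom k" and "Dj \<in> in_dom k"
  shows "M Di = M Dj"
  using assms(2)
proof (induction rule: cnf.induct)
  case (base M)
  then show ?case using assms(1,3,4) by blast
next
  case (post M A)
  then show ?case by simp
next
  case (conv M1 M2 r)
  then show ?case by metis
next
  case (equiv M M')
  then show ?case using assms(3,4) by simp
qed

lemma input_independent_in_cnf:
  assumes "N \<in> P" and "\<forall>Di\<in>in_dom k. \<forall>Dj\<in>in_dom k. M Di = M Dj"
  shows "M \<in> cnf k P"
proof -
  define D0 where "D0 = replicate k True"
  have "D0 \<in> in_dom k"
    by (simp add: D0_def in_dom_def)
  then have "\<forall>D\<in>in_dom k. M D = bind_pmf (N D) (\<lambda>_. M D0)"
    using assms(2) by (metis bind_pmf_const)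
  moreover have "(\<lambda>D. bind_pmf (N D) (\<lambda>_. M D0)) \<in> cnf k P"
    using assms(1) by (rule cnf.post[OF cnf.base])
  ultimately show ?thesis
    using cnf.equiv by blast
qed

lemma cnf_singleton_input_independent:
  assumes "\<forall>Di\<in>in_dom k. \<forall>Dj\<in>in_dom k. N Di = N Dj"
  shows "cnf k {N} = {M. \<forall>Di\<in>in_dom k. \<forall>Dj\<in>in_dom k. M Di = M Dj}"
  using cnf_input_independent[of "{N}"] input_independent_in_cnf[of N "{N}"] assms by blast

theorem lemma1:
  fixes p :: real and k :: nat and enc :: "bool list \<Rightarrow> 'b"
  assumes "0 \<le> p" and "p \<le> 1" and "inj enc"
  defines "q \<equiv> max p (1 - p)"
  shows "cnf k {(\<lambda>D. map_pmf enc (RR p D))} = cnf k {(\<lambda>D. map_pmf enc (RR q D))}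
     \<and> (p = 1/2 \<longrightarrow> cnf k {(\<lambda>D. map_pmf enc (RR p D))} =
           {M. \<forall>Di\<in>in_dom k. \<forall>Dj\<in>in_dom k. \<forall>\<omega>. pmf (M Di) \<omega> = pmf (M Dj) \<omega>})"
proof (intro conjI impI)
  define flip where "flip = enc \<circ> map Not \<circ> inv enc"
  have flip_RR: "map_pmf enc (RR r D) = map_pmf flip (map_pmf enc (RR (1 - r) D))"
    if "0 \<le> r" "r \<le> 1" for r D
    using RR_eq_map_Not_RR[OF that] assms(3) by (simp add: flip_def pmf.map_comp o_def)
  have "cnf k {(\<lambda>D. map_pmf enc (RR p D))} = cnf k {(\<lambda>D. map_pmf enc (RR (1 - p) D))}"
    using flip_RR[of p] flip_RR[of "1 - p"] assms(1,2) by (intro cnf_singleton_eqI) auto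
  then show "cnf k {(\<lambda>D. map_pmf enc (RR p D))} = cnf k {(\<lambda>D. map_pmf enc (RR q D))}"
    by (cases "1 - p \<le> p") (simp_all add: q_def)
next
  assume half: "p = 1/2"
  have "\<forall>Di\<in>in_dom k. \<forall>Dj\<in>in_dom k. map_pmf enc (RR (1/2) Di) = map_pmf enc (RR (1/2) Dj)"
  proof (intro ballI)
    fix Di Dj assume "Di \<in> in_dom k" "Dj \<in> in_dom k"
    then show "map_pmf enc (RR (1/2) Di) = map_pmf enc (RR (1/2) Dj)"
      by (simp add: in_dom_def RR_half_eq[of Di Dj])
  qed
  then have "cnf k {(\<lambda>D. map_pmf enc (RR p D))} = {M. \<forall>Di\<in>in_dom k. \<forall>Dj\<in>in_dom k. M Di = M Dj}"
    unfolding half by (rule cnf_singleton_input_independent)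
  then show "cnf k {(\<lambda>D. map_pmf enc (RR p D))} =
      {M. \<forall>Di\<in>in_dom k. \<forall>Dj\<in>in_dom k. \<forall>\<omega>. pmf (M Di) \<omega> = pmf (M Dj) \<omega>}"
    by (simp only: pmf_eq_iff)
qed

end
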